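(* Let $p\ge 2$, let $\boldsymbol{S}$ be a $p\times p$ symmetric positive semidefinite matrix, let $\rho>0$, and let $k$ be an integer with $0\le k\le \binom{p}{2}$. For positive definite $\boldsymbol{\Sigma}$ put $f(\boldsymbol{\Sigma})=\ln\det\boldsymbol{\Sigma}+\mathrm{tr}(\boldsymbol{\Sigma}^{-1}\boldsymbol{S})$ and $h_\rho(\boldsymbol{\Sigma})=f(\boldsymbol{\Sigma})+\frac{\rho}{2}\mathrm{dist}(\boldsymbol{\Sigma},\mathcal{C})^2$, where $\mathcal{C}=\{\boldsymbol{A}\in\mathbb{R}^{p\times p}:\boldsymbol{A}=\boldsymbol{A}^T,\ \|\boldsymbol{A}\|_0\le 2k+p\}$ and $\mathrm{dist}$ is Frobenius distance. Let $\boldsymbol{\Sigma}_k\succ\boldsymbol{0}$, let $\boldsymbol{\Theta}_k\in P_{\mathcal{C}}(\boldsymbol{\Sigma}_k)$, and let $\widehat{\boldsymbol{\Sigma}}$ be the unique solution of the Sylvester equation $$\rho\,\widehat{\boldsymbol{\Sigma}}+\boldsymbol{\Sigma}_k^{-1}\widehat{\boldsymbol{\Sigma}}\boldsymbol{\Sigma}_k^{-1}=\rho\,\boldsymbol{\Theta}_k+\boldsymbol{\Sigma}_k^{-1}\boldsymbol{S}\boldsymbol{\Sigma}_k^{-1}.$$ If $\boldsymbol{\Sigma}_k$ is not a stationary point of $h_\rho$, then there exists an integer $s\ge 0$ such that $\boldsymbol{\Sigma}_{k+1}=\boldsymbol{\Sigma}_k+2^{-s}(\widehat{\boldsymbol{\Sigma}}-\boldsymbol{\Sigma}_k)$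 satisfies $\boldsymbol{\Sigma}_{k+1}\succ\boldsymbol{0}$ and $h_\rho(\boldsymbol{\Sigma}_{k+1})<h_\rho(\boldsymbol{\Sigma}_k)$.
   Context: $\|\boldsymbol{A}\|_0$ is the number of nonzero entries of $\boldsymbol{A}$. $P_{\mathcal{C}}(\boldsymbol{\Sigma})$ denotes the (possibly multi-valued) set of Frobenius-nearest points of $\mathcal{C}$ to $\boldsymbol{\Sigma}$ (obtained by keeping the diagonal and the $k$ largest-magnitude upper-triangular entries, mirrored symmetrically, and zeroing the rest). $\widehat{\boldsymbol{\Sigma}}$ is the minimizer of the quadratic surrogate $q_\rho(\boldsymbol{\Sigma}\mid\boldsymbol{\Sigma}_k)=f(\boldsymbol{\Sigma}_k)+\mathrm{tr}[\boldsymbol{\Sigma}_k^{-1}(\boldsymbol{\Sigma}-\boldsymbol{\Sigma}_k)]-\mathrm{tr}[\boldsymbol{\Sigma}_k^{-1}\boldsymbol{S}\boldsymbol{\Sigma}_k^{-1}(\boldsymbol{\Sigma}-\boldsymbol{\Sigma}_k)]+\frac12\mathrm{tr}[\boldsymbol{\Sigma}_k^{-1}(\boldsymbol{\Sigma}-\boldsymbol{\Sigma}_k)\boldsymbol{\Sigma}_k^{-1}(\boldsymbol{\Sigma}-\boldsymbol{\Sigma}_k)]+\frac{\rho}{2}\|\boldsymbol{\Sigma}-\boldsymbol{\Theta}_k\|_F^2$. A positive definite $\boldsymbol{\Sigma}$ is called a stationary point of $h_\rho$ if $\boldsymbol{\Sigma}^{-1}-\boldsymbol{\Sigma}^{-1}\boldsymbol{S}\boldsymbol{\Sigma}^{-1}+\rho(\boldsymbol{\Sigma}-\boldsymbol{\Theta})=\boldsymbol{0}$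 for some $\boldsymbol{\Theta}\in P_{\mathcal{C}}(\boldsymbol{\Sigma})$. *)

theory Defs
  imports "HOL-Analysis.Analysis"
begin

type_synonym 'n mat = "real^'n^'n"

definition sym_mat :: "'n::finite mat \<Rightarrow> bool" where
  "sym_mat A \<longleftrightarrow> transpose A = A"

definition pos_def :: "'n::finite mat \<Rightarrow> bool" where
  "pos_def A \<longleftrightarrow> sym_mat A \<and> (\<forall>x::real^'n. x \<noteq> 0 \<longrightarrow> x \<bullet> (A *v x) > 0)"

definition pos_semidef :: "'n::finite mat \<Rightarrow> bool" where
  "pos_semidef A \<longleftrightarrow> sym_mat A \<and> (\<forall>x::real^'n. x \<bullet> (A *v x) \<ge> 0)"

definition nnz :: "'n::finite mat \<Rightarrow> nat" where
  "nnz A = card {(i,j). A$i$j \<noteq> 0}"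

definition frob :: "'n::finite mat \<Rightarrow> real" where
  "frob A = sqrt (\<Sum>i\<in>UNIV. \<Sum>j\<in>UNIV. (A$i$j)^2)"

definition frob_dist :: "'n::finite mat \<Rightarrow> 'n mat \<Rightarrow> real" where
  "frob_dist A B = frob (A - B)"

definition C_set :: "nat \<Rightarrow> 'n::finite mat set" where
  "C_set k = {A. sym_mat A \<and> nnz A \<le> 2*k + CARD('n)}"

definition dist_C :: "nat \<Rightarrow> 'n::finite mat \<Rightarrow> real" where
  "dist_C k S = (INF A\<in>C_set k. frob_dist S A)"

definition proj_C :: "nat \<Rightarrow> 'n::finite mat \<Rightarrow> 'n mat set" where
  "proj_C k S = {T \<in> C_set k. \<forall>A\<in>C_set k. frob_dist S T \<le> frob_dist S A}"

definition f_obj :: "'n::finite mat \<Rightarrow> 'n mat \<Rightarrow> real" where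
  "f_obj S Sig = ln (det Sig) + trace (matrix_inv Sig ** S)"

definition h_obj :: "nat \<Rightarrow> real \<Rightarrow> 'n::finite mat \<Rightarrow> 'n mat \<Rightarrow> real" where
  "h_obj k \<rho> S Sig = f_obj S Sig + \<rho> / 2 * (dist_C k Sig)^2"

definition stationary :: "nat \<Rightarrow> real \<Rightarrow> 'n::finite mat \<Rightarrow> 'n mat \<Rightarrow> bool" where
  "stationary k \<rho> S Sig \<longleftrightarrow> pos_def Sig \<and>
     (\<exists>T\<in>proj_C k Sig. matrix_inv Sig - matrix_inv Sig ** S ** matrix_inv Sig
                        + \<rho> *\<^sub>R (Sig - T) = 0)"

end

theory Submission
  imports Defs
begin

text \<open>
  Let \<open>A\<close> be the inverse of \<open>Sk\<close>, \<open>D = Shat - Sk\<close> and \<open>G = A - A S A + \<rho> (Sk - Tk)\<close>.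
  \<open>G\<close> is the gradient at \<open>Sk\<close> of the surrogate \<open>g = f + \<rho>/2 \<parallel>_ - Tk\<parallel>\<^sup>2\<close>, which
  majorises \<open>h\<^sub>\<rho>\<close> because \<open>Tk \<in> C\<close> and agrees with it at \<open>Sk\<close> because \<open>Tk\<close> is a nearest
  point. The Sylvester equation reads \<open>\<rho> D + A D A = - G\<close>. The map \<open>X \<mapsto> \<rho> X + A X A\<close> is
  positive definite for the trace inner product, since \<open>tr (X\<^sup>T A X A)\<close> is the trace of a product
  of two positive semidefinite matrices; so the equation has unique solutions, which makes \<open>Shat\<close>
  symmetric, and \<open>D \<noteq> 0\<close> because \<open>G \<noteq> 0\<close> away from stationary points. Hence the derivative
  of \<open>g\<close> along \<open>D\<close>, namely \<open>tr (G D) = - \<rho> \<parallel>D\<parallel>\<^sup>2 - tr (D A D A)\<close>, is negative; it is computed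
  with Jacobi's formula for \<open>ln det\<close> and the resolvent identity for the inverse. So \<open>g\<close>, and with
  it \<open>h\<^sub>\<rho>\<close>, strictly decreases for all small steps along \<open>D\<close>, among them some \<open>2\<^sup>-\<^sup>s\<close>
  small enough to keep \<open>Sk + 2\<^sup>-\<^sup>s D\<close> positive definite.
\<close>

section \<open>Matrix identities\<close>

lemma matrix_mul_add_rdistrib: "((A::'a::semiring_1^'n^'m) + B) ** C = A ** C + B ** C"
  by (simp add: matrix_matrix_mult_def vec_eq_iff distrib_right sum.distrib)

lemma matrix_mul_diff_ldistrib: "(A::'a::ring_1^'n^'m) ** (B - C) = A ** B - A ** C"
  by (simp add: matrix_matrix_mult_def vec_eq_iff right_diff_distrib sum_subtractf)

lemma matrix_mul_diff_rdistrib: "((A::'a::ring_1^'n^'m) - B) ** C = A ** C - B ** C"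
  by (simp add: matrix_matrix_mult_def vec_eq_iff left_diff_distrib sum_subtractf)

lemma matrix_mul_minus_right: "(A::'a::ring_1^'n^'m) ** (- B) = - (A ** B)"
  by (simp add: matrix_matrix_mult_def vec_eq_iff sum_negf)

lemma matrix_mul_scaleR_right: "(A::real^'n^'m) ** (k *\<^sub>R B) = k *\<^sub>R (A ** B)"
  by (simp add: matrix_scalar_ac scalar_matrix_assoc)

lemma transpose_add: "transpose ((A::'a::semiring_1^'n^'m) + B) = transpose A + transpose B"
  by (simp add: transpose_def vec_eq_iff)

lemma transpose_diff: "transpose ((A::'a::ring_1^'n^'m) - B) = transpose A - transpose B"
  by (simp add: transpose_def vec_eq_iff)

lemma trace_scaleR: "trace (k *\<^sub>R (A::real^'n^'n)) = k * trace A"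
  by (simp add: trace_def sum_distrib_left)

lemma trace_minus: "trace (- (A::'a::ring_1^'n^'n)) = - trace A"
  by (simp add: trace_def sum_negf)

lemma trace_transpose: "trace (transpose (A::'a::semiring_1^'n^'n)) = trace A"
  by (simp add: trace_def transpose_def)

lemma trace_mult_eq_sum:
  "trace ((X::'a::comm_semiring_1^'n^'n) ** Y) = (\<Sum>i\<in>UNIV. \<Sum>j\<in>UNIV. X$i$j * Y$j$i)"
  by (simp add: trace_def matrix_matrix_mult_def)

lemma trace_transpose_mult_eq_sum:
  "trace (transpose (X::'a::comm_semiring_1^'n^'n) ** Y) = (\<Sum>i\<in>UNIV. \<Sum>j\<in>UNIV. X$i$j * Y$i$j)"
  unfolding trace_mult_eq_sum transpose_def by simp (rule sum.swap)

lemma trace_transpose_mult_self_pos: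
  assumes "(X::real^'n^'n) \<noteq> 0" shows "0 < trace (transpose X ** X)"
proof -
  obtain i j where "X $ i $ j \<noteq> 0" using assms by (auto simp: vec_eq_iff)
  then have sq: "0 < X $ i $ j * X $ i $ j" by (metis not_real_square_gt_zero)
  have "0 < (\<Sum>j\<in>UNIV. X $ i $ j * X $ i $ j)"
    by (rule sum_pos2[where i=j]) (use sq in auto)
  then have "0 < (\<Sum>i\<in>UNIV. \<Sum>j\<in>UNIV. X $ i $ j * X $ i $ j)"
    by - (rule sum_pos2[where i=i], auto intro: sum_nonneg)
  then show ?thesis by (simp add: trace_transpose_mult_eq_sum)
qed

lemma inner_axis_matrix_vector_axis: "axis i 1 \<bullet> ((B::real^'n^'n) *v axis j 1) = B $ i $ j"
  by (simp add: inner_axis' matrix_vector_mult_basis column_def)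

lemma inner_transpose_matrix_vector: "(x::real^'n) \<bullet> (transpose M *v y) = (M *v x) \<bullet> y"
  unfolding inner_vec_def matrix_vector_mult_def transpose_def
  by (simp add: sum_distrib_left sum_distrib_right mult_ac) (rule sum.swap)

lemma matrix_inv_right:
  assumes "invertible (A::'a::semiring_1^'n^'m)" shows "A ** matrix_inv A = mat 1"
  using someI_ex[OF assms[unfolded invertible_def]] by (simp add: matrix_inv_def)

lemma matrix_inv_left:
  assumes "invertible (A::'a::semiring_1^'n^'m)" shows "matrix_inv A ** A = mat 1"
  using someI_ex[OF assms[unfolded invertible_def]] by (simp add: matrix_inv_def)

lemma matrix_inv_entry_cramer:
  fixes A :: "real^'n^'n"
  assumes "invertible A"
  shows "matrix_inv A $ i $ j = det (\<chi> r c. if c = i then axis j 1 $ r else A $ r $ c) / det A"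
proof -
  have "A *v (matrix_inv A *v axis j 1) = axis j 1"
    by (simp add: matrix_vector_mul_assoc matrix_inv_right[OF assms])
  then have "matrix_inv A *v axis j 1
      = (\<chi> k. det (\<chi> r c. if c = k then axis j 1 $ r else A $ r $ c) / det A)"
    using cramer assms invertible_det_nz by blast
  then show ?thesis
    by (metis (no_types, lifting) column_def matrix_vector_mult_basis vec_lambda_beta)
qed

section \<open>Positive definite matrices\<close>

lemma pos_def_invertible:
  assumes "pos_def (A::real^'n^'n)" shows "invertible A"
proof -
  have "x = 0" if "A *v x = 0" for x
    using assms that unfolding pos_def_def by (metis inner_zero_right less_irrefl)
  then show ?thesis
    by (simp add: invertible_left_inverse matrix_left_invertible_ker)
qed

lemma sym_mat_matrix_inv:
  assumes "invertible (A::real^'n^'n)" and "sym_mat A"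
  shows "sym_mat (matrix_inv A)"
proof -
  have "transpose (matrix_inv A) ** A = mat 1"
    using assms matrix_inv_right[OF assms(1)]
    by (metis matrix_transpose_mul sym_mat_def transpose_mat)
  then have "transpose (matrix_inv A) = transpose (matrix_inv A) ** (A ** matrix_inv A)"
    by (simp add: matrix_mul_assoc matrix_inv_right[OF assms(1)])
  also have "\<dots> = matrix_inv A"
    by (simp add: matrix_mul_assoc \<open>transpose (matrix_inv A) ** A = mat 1\<close>)
  finally show ?thesis unfolding sym_mat_def .
qed

lemma pos_def_matrix_inv:
  assumes "pos_def (A::real^'n^'n)" shows "pos_def (matrix_inv A)"
  unfolding pos_def_def
proof (intro conjI allI impI)
  have "invertible A" using pos_def_invertible[OF assms] .
  then show "sym_mat (matrix_inv A)"
    using assms sym_mat_matrix_inv unfolding pos_def_def by blast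
  fix x :: "real^'n" assume "x \<noteq> 0"
  define y where "y = matrix_inv A *v x"
  have Ay: "A *v y = x"
    by (simp add: y_def matrix_vector_mul_assoc matrix_inv_right[OF \<open>invertible A\<close>])
  then have "y \<noteq> 0" using \<open>x \<noteq> 0\<close> by auto
  then have "0 < y \<bullet> (A *v y)" using assms unfolding pos_def_def by blast
  then show "0 < x \<bullet> (matrix_inv A *v x)"
    by (simp add: Ay inner_commute flip: y_def)
qed

lemma pos_def_imp_pos_semidef:
  assumes "pos_def A" shows "pos_semidef A"
  unfolding pos_semidef_def
proof (intro conjI allI)
  show "sym_mat A" using assms unfolding pos_def_def by blast
  show "0 \<le> x \<bullet> (A *v x)" for x
    using assms unfolding pos_def_def by (cases "x = 0") (auto intro: less_imp_le)
qed

lemma pos_def_coercive: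
  assumes "pos_def (A::real^'n^'n)"
  obtains m where "m > 0" and "\<And>x. m * (norm x)^2 \<le> x \<bullet> (A *v x)"
proof -
  have "\<exists>u\<in>sphere (0::real^'n) 1. \<forall>y\<in>sphere 0 1. u \<bullet> (A *v u) \<le> y \<bullet> (A *v y)"
    by (rule continuous_attains_inf) (auto intro!: continuous_intros)
  then obtain u where u: "norm u = 1" and min: "\<And>y. norm y = 1 \<Longrightarrow> u \<bullet> (A *v u) \<le> y \<bullet> (A *v y)"
    by auto
  have "u \<noteq> 0" using u by auto
  then have pos: "0 < u \<bullet> (A *v u)" using assms unfolding pos_def_def by blast
  have "(u \<bullet> (A *v u)) * (norm x)^2 \<le> x \<bullet> (A *v x)" for x
  proof (cases "x = 0")
    case False
    define y where "y = (1 / norm x) *\<^sub>R x"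
    have "norm y = 1" using False by (simp add: y_def)
    then have "u \<bullet> (A *v u) * (norm x)^2 \<le> (y \<bullet> (A *v y)) * (norm x)^2"
      using min by (simp add: mult_right_mono)
    also have "\<dots> = (norm x *\<^sub>R y) \<bullet> (A *v (norm x *\<^sub>R y))"
      by (simp add: matrix_vector_mult_scaleR power2_eq_square)
    also have "norm x *\<^sub>R y = x"
      using False by (simp add: y_def)
    finally show ?thesis .
  qed simp
  with pos show thesis using that by blast
qed

lemma continuous_det:
  fixes M :: "'a::t2_space \<Rightarrow> real^'n^'n"
  assumes "\<And>i j. continuous F (\<lambda>x. M x $ i $ j)"
  shows "continuous F (\<lambda>x. det (M x))"
  unfolding det_def by (intro continuous_sum continuous_mult continuous_const continuous_prod assms)

lemma det_pos_def_pos: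
  assumes "pos_def (A::real^'n^'n)" shows "0 < det A"
proof (rule ccontr)
  assume "\<not> 0 < det A"
  define P where "P s = (1 - s) *\<^sub>R mat 1 + s *\<^sub>R A" for s
  have "continuous_on {0..1} (\<lambda>s. det (P s))"
    unfolding P_def
    by (intro continuous_at_imp_continuous_on ballI continuous_det) (auto intro!: continuous_intros)
  moreover have "det (P 1) \<le> 0" "0 \<le> det (P 0)"
    using \<open>\<not> 0 < det A\<close> by (simp_all add: P_def)
  ultimately obtain s where s: "0 \<le> s" "s \<le> 1" "det (P s) = 0"
    using IVT2'[of "\<lambda>s. det (P s)" 1 0 0] by auto
  have "pos_def (P s)"
    unfolding pos_def_def
  proof (intro conjI allI impI)
    show "sym_mat (P s)"
      using assms by (simp add: pos_def_def sym_mat_def P_def transpose_add transpose_scalar)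
    fix x :: "real^'n" assume "x \<noteq> 0"
    then have "0 < x \<bullet> x" "0 < x \<bullet> (A *v x)"
      using assms unfolding pos_def_def by auto
    then have "0 < (1 - s) * (x \<bullet> x) + s * (x \<bullet> (A *v x))"
      using s by (cases "s = 1") (auto intro!: add_nonneg_pos add_pos_nonneg)
    then show "0 < x \<bullet> (P s *v x)"
      by (simp add: P_def matrix_vector_mult_add_rdistrib scaleR_matrix_vector_assoc[symmetric]
          inner_add_right)
  qed
  then show False
    using s(3) pos_def_invertible invertible_det_nz by blast
qed

lemma eventually_pos_def_line:
  fixes A D :: "real^'n^'n"
  assumes "pos_def A" and "sym_mat D"
  shows "eventually (\<lambda>t. pos_def (A + t *\<^sub>R D)) (at 0)"
proof -
  obtain m where m: "m > 0" "\<And>x. m * (norm x)^2 \<le> x \<bullet> (A *v x)"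
    using pos_def_coercive[OF assms(1)] by blast
  obtain K where K: "K > 0" "\<And>x. norm (D *v x) \<le> norm x * K"
    using bounded_linear.pos_bounded[OF matrix_vector_mul_bounded_linear[of D]] by blast
  have "pos_def (A + t *\<^sub>R D)" if t: "\<bar>t\<bar> < m / K" for t
    unfolding pos_def_def
  proof (intro conjI allI impI)
    show "sym_mat (A + t *\<^sub>R D)"
      using assms unfolding pos_def_def sym_mat_def by (simp add: transpose_add transpose_scalar)
    fix x :: "real^'n" assume "x \<noteq> 0"
    have "\<bar>t * (x \<bullet> (D *v x))\<bar> \<le> \<bar>t\<bar> * (norm x * (norm x * K))"
      unfolding abs_mult
      by (intro mult_left_mono order_trans[OF Cauchy_Schwarz_ineq2] mult_left_mono K(2)) auto
    also have "\<dots> < m * (norm x)^2"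
      using t K(1) \<open>x \<noteq> 0\<close> by (simp add: field_simps power2_eq_square)
    finally have "\<bar>t * (x \<bullet> (D *v x))\<bar> < x \<bullet> (A *v x)"
      using m(2)[of x] by linarith
    then show "0 < x \<bullet> ((A + t *\<^sub>R D) *v x)"
      by (simp add: matrix_vector_mult_add_rdistrib scaleR_matrix_vector_assoc[symmetric]
          inner_add_right abs_less_iff)
  qed
  moreover have "eventually (\<lambda>t. \<bar>t\<bar> < m / K) (at (0::real))"
    using m(1) K(1) by (intro order_tendstoD(2)[OF tendsto_rabs[OF tendsto_ident_at, of 0], simplified]) auto
  ultimately show ?thesis
    by (auto elim: eventually_mono)
qed

section \<open>Traces of products of positive semidefinite matrices\<close>

lemma pos_semidef_diag_nonneg:
  assumes "pos_semidef (B::real^'n^'n)" shows "0 \<le> B $ i $ i"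
  using assms inner_axis_matrix_vector_axis[of i B i] unfolding pos_semidef_def by metis

lemma pos_semidef_diag_zero:
  fixes B :: "real^'n^'n"
  assumes psd: "pos_semidef B" and zero: "B $ i $ i = 0"
  shows "B $ i $ j = 0"
proof (rule ccontr)
  assume nz: "B $ i $ j \<noteq> 0"
  have sym: "B $ j $ i = B $ i $ j"
    using psd unfolding pos_semidef_def sym_mat_def by (metis transpose_def vec_lambda_beta)
  \<comment> \<open>the quadratic form at \<open>t e\<^sub>i + e\<^sub>j\<close> is affine in \<open>t\<close> with nonzero slope\<close>
  define t where "t = - (B $ j $ j + 1) / (2 * B $ i $ j)"
  define x :: "real^'n" where "x = t *\<^sub>R axis i 1 + axis j 1"
  have "x \<bullet> (B *v x) = t * t * B $ i $ i + t * B $ i $ j + t * B $ j $ i + B $ j $ j"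
    by (simp add: x_def matrix_vector_right_distrib matrix_vector_mult_scaleR inner_add_left
        inner_add_right inner_axis_matrix_vector_axis algebra_simps)
  also have "\<dots> = -1"
    using zero sym nz by (simp add: t_def field_simps)
  finally show False using psd unfolding pos_semidef_def by (metis neg_0_le_iff_le not_one_le_zero)
qed

definition outer :: "real^'n \<Rightarrow> real^'n^'n" where
  "outer u = (\<chi> r c. u $ r * u $ c)"

lemma outer_mult_vector: "outer u *v x = (u \<bullet> x) *\<^sub>R u"
  by (simp add: outer_def vec_eq_iff matrix_vector_mult_def inner_vec_def sum_distrib_left mult_ac)

lemma trace_mult_outer: "trace (A ** outer u) = u \<bullet> (A *v u)"
  by (simp add: trace_mult_eq_sum outer_def inner_vec_def matrix_vector_mult_def
      sum_distrib_left mult_ac)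

lemma pos_semidef_deflate:
  fixes B :: "real^'n^'n"
  assumes psd: "pos_semidef B" and pos: "B $ i $ i > 0"
  defines "B' \<equiv> B - (1 / B $ i $ i) *\<^sub>R outer (column i B)"
  shows "pos_semidef B'" and "{j. B' $ j $ j \<noteq> 0} \<subset> {j. B $ j $ j \<noteq> 0}"
proof -
  let ?c = "B $ i $ i" and ?b = "column i B"
  have sym: "transpose B = B" using psd unfolding pos_semidef_def sym_mat_def by blast
  have Be: "B *v axis i 1 = ?b" by (simp add: matrix_vector_mult_basis)
  have eB: "axis i 1 \<bullet> (B *v x) = ?b \<bullet> x" for x
    by (metis Be dot_lmul_matrix transpose_matrix_vector sym)
  have bi: "?b $ i = ?c" by (simp add: column_def)
  have eb: "axis i 1 \<bullet> ?b = ?c" by (simp add: inner_axis' bi)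
  show "pos_semidef B'"
    unfolding pos_semidef_def sym_mat_def
  proof (intro conjI allI)
    show "transpose B' = B'"
      using sym by (simp add: B'_def transpose_diff transpose_scalar)
        (simp add: outer_def transpose_def vec_eq_iff mult.commute)
    fix x :: "real^'n"
    define s where "s = (?b \<bullet> x) / ?c"
    define w where "w = x - s *\<^sub>R axis i 1"
    have "w \<bullet> (B *v w) = x \<bullet> (B *v x) - 2 * s * (?b \<bullet> x) + s^2 * ?c"
      unfolding w_def
      by (simp add: matrix_vector_mult_diff_distrib matrix_vector_mult_scaleR inner_diff_left
          inner_diff_right eB Be eb inner_axis_matrix_vector_axis inner_commute power2_eq_square
          algebra_simps)
    also have "\<dots> = x \<bullet> (B' *v x)"
      using pos by (simp add: B'_def s_def matrix_vector_mult_diff_rdistrib outer_mult_vector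
          scaleR_matrix_vector_assoc[symmetric] inner_diff_right power2_eq_square field_simps
          inner_commute)
    finally show "0 \<le> x \<bullet> (B' *v x)"
      using psd unfolding pos_semidef_def by metis
  qed
  have diag: "B' $ j $ j = B $ j $ j - (?b $ j)^2 / ?c" for j
    by (simp add: B'_def outer_def power2_eq_square)
  have "B' $ j $ j = 0" if "B $ j $ j = 0" for j
    using diag[of j] that pos_semidef_diag_zero[OF psd that, of i] by (simp add: column_def)
  moreover have "B' $ i $ i = 0" "B $ i $ i \<noteq> 0"
    using diag[of i] bi pos by (simp_all add: power2_eq_square)
  ultimately show "{j. B' $ j $ j \<noteq> 0} \<subset> {j. B $ j $ j \<noteq> 0}"
    by blast
qed

lemma trace_mult_pos_semidef_nonneg:
  fixes A B :: "real^'n^'n"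
  assumes A: "pos_semidef A" and B: "pos_semidef B"
  shows "0 \<le> trace (A ** B)"
  using B
proof (induction "card {i. B $ i $ i \<noteq> 0}" arbitrary: B rule: less_induct)
  case less
  show ?case
  proof (cases "\<exists>i. B $ i $ i \<noteq> 0")
    case False
    then have "B = 0"
      using pos_semidef_diag_zero[OF less.prems] by (simp add: vec_eq_iff)
    then show ?thesis by (simp add: trace_def)
  next
    case True
    then obtain i where "B $ i $ i \<noteq> 0" by blast
    then have pos: "B $ i $ i > 0"
      using pos_semidef_diag_nonneg[OF less.prems, of i] by simp
    define B' where "B' = B - (1 / B $ i $ i) *\<^sub>R outer (column i B)"
    note deflate = pos_semidef_deflate[OF less.prems pos, folded B'_def]
    have "0 \<le> trace (A ** B')"
      using less.hyps[OF psubset_card_mono[OF _ deflate(2)] deflate(1)] by simp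
    moreover have "0 \<le> column i B \<bullet> (A *v column i B)"
      using A unfolding pos_semidef_def by blast
    moreover have "trace (A ** B) = trace (A ** B') + (1 / B $ i $ i) * (column i B \<bullet> (A *v column i B))"
      by (simp add: B'_def matrix_mul_diff_ldistrib matrix_mul_scaleR_right trace_sub trace_scaleR
          trace_mult_outer)
    ultimately show ?thesis using pos by simp
  qed
qed

lemma pos_semidef_congruence:
  assumes "pos_semidef (A::real^'n^'n)"
  shows "pos_semidef (transpose X ** A ** X)"
  unfolding pos_semidef_def sym_mat_def
proof (intro conjI allI)
  show "transpose (transpose X ** A ** X) = transpose X ** A ** X"
    using assms by (simp add: pos_semidef_def sym_mat_def matrix_transpose_mul matrix_mul_assoc)
  have "x \<bullet> ((transpose X ** A ** X) *v x) = (X *v x) \<bullet> (A *v (X *v x))" for x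
    by (simp only: matrix_vector_mul_assoc[symmetric] inner_transpose_matrix_vector)
  then show "0 \<le> x \<bullet> ((transpose X ** A ** X) *v x)" for x
    using assms unfolding pos_semidef_def by metis
qed

lemma trace_sylvester_pos:
  fixes A X :: "real^'n^'n"
  assumes "\<rho> > 0" and "pos_semidef A" and "X \<noteq> 0"
  shows "0 < trace (transpose X ** (\<rho> *\<^sub>R X + A ** X ** A))"
proof -
  have "trace (transpose X ** (\<rho> *\<^sub>R X + A ** X ** A))
      = \<rho> * trace (transpose X ** X) + trace (A ** (transpose X ** A ** X))"
    by (simp add: matrix_add_ldistrib matrix_mul_scaleR_right trace_add trace_scaleR matrix_mul_assoc
        trace_mul_sym[of _ A])
  moreover have "0 < \<rho> * trace (transpose X ** X)"
    using assms by (simp add: trace_transpose_mult_self_pos)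
  moreover have "0 \<le> trace (A ** (transpose X ** A ** X))"
    using assms by (simp add: trace_mult_pos_semidef_nonneg pos_semidef_congruence)
  ultimately show ?thesis by linarith
qed

lemma sylvester_homogeneous_eq_0:
  fixes A X :: "real^'n^'n"
  assumes "\<rho> > 0" and "pos_semidef A" and "\<rho> *\<^sub>R X + A ** X ** A = 0"
  shows "X = 0"
  using trace_sylvester_pos[OF assms(1,2)] assms(3) by (force simp: trace_def)

lemma sylvester_solution_sym:
  fixes A X C :: "real^'n^'n"
  assumes rho: "\<rho> > 0" and psd: "pos_semidef A" and "sym_mat C"
    and eq: "\<rho> *\<^sub>R X + A ** X ** A = C"
  shows "sym_mat X"
proof -
  have "transpose A = A" using psd unfolding pos_semidef_def sym_mat_def by blast
  then have "\<rho> *\<^sub>R transpose X + A ** transpose X ** A = C"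
    using arg_cong[where f=transpose, OF eq] \<open>sym_mat C\<close>
    by (simp add: sym_mat_def transpose_add transpose_scalar matrix_transpose_mul matrix_mul_assoc)
  with eq have "\<rho> *\<^sub>R (X - transpose X) + A ** (X - transpose X) ** A = 0"
    by (simp add: matrix_mul_diff_ldistrib matrix_mul_diff_rdistrib scaleR_diff_right
        algebra_simps)
  then have "X - transpose X = 0"
    by (rule sylvester_homogeneous_eq_0[OF rho psd])
  then show ?thesis by (simp add: sym_mat_def)
qed

section \<open>Derivatives along a line\<close>

lemma eventually_invertible_nhds:
  fixes M :: "'a::t2_space \<Rightarrow> real^'n^'n"
  assumes "\<And>i j. isCont (\<lambda>x. M x $ i $ j) a" and "invertible (M a)"
  shows "eventually (\<lambda>x. invertible (M x)) (nhds a)"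
proof -
  have "isCont (\<lambda>x. det (M x)) a" and "det (M a) \<noteq> 0"
    using assms continuous_det invertible_det_nz by blast+
  then have "eventually (\<lambda>x. det (M x) \<noteq> 0) (at a)"
    using isContD tendsto_imp_eventually_ne by blast
  then show ?thesis
    using \<open>det (M a) \<noteq> 0\<close> by (auto simp: eventually_at_filter invertible_det_nz elim: eventually_mono)
qed

lemma isCont_matrix_inv_entry:
  fixes M :: "'a::t2_space \<Rightarrow> real^'n^'n"
  assumes cont: "\<And>i j. isCont (\<lambda>x. M x $ i $ j) a" and inv: "invertible (M a)"
  shows "isCont (\<lambda>x. matrix_inv (M x) $ i $ j) a"
proof -
  let ?cramer = "\<lambda>x. det (\<chi> r c. if c = i then axis j 1 $ r else M x $ r $ c) / det (M x)"
  have det_cont: "isCont (\<lambda>x. det (M x)) a"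
    using continuous_det cont by blast
  have "det (M a) \<noteq> 0" using inv invertible_det_nz by blast
  have inv_eq: "eventually (\<lambda>x. matrix_inv (M x) $ i $ j = ?cramer x) (nhds a)"
    using eventually_invertible_nhds[OF cont inv]
    by eventually_elim (simp add: matrix_inv_entry_cramer)
  have "isCont (\<lambda>x. if c = i then axis j 1 $ r else M x $ r $ c) a" for r c
    by (cases "c = i") (simp_all add: cont)
  then have "isCont (\<lambda>x. det (\<chi> r c. if c = i then axis j 1 $ r else M x $ r $ c)) a"
    using continuous_det[where M="\<lambda>x. \<chi> r c. if c = i then axis j 1 $ r else M x $ r $ c"]
    by simp
  then have "isCont ?cramer a"
    using det_cont \<open>det (M a) \<noteq> 0\<close> by (rule isCont_divide)
  with isCont_cong[OF inv_eq] show ?thesis by blast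
qed

lemma isCont_matrix_mult_entry:
  fixes M :: "'a::t2_space \<Rightarrow> real^'n^'n"
  assumes "\<And>k l. isCont (\<lambda>x. M x $ k $ l) a"
  shows "isCont (\<lambda>x. (C ** M x) $ i $ j) a"
  unfolding matrix_matrix_mult_def
  by (simp, intro continuous_sum continuous_mult continuous_const assms)

lemma has_real_derivative_det_id_line:
  fixes M :: "real^'n^'n"
  shows "((\<lambda>t. det (mat 1 + t *\<^sub>R M)) has_real_derivative trace M) (at 0)"
proof -
  define P where "P = {p. p permutes (UNIV::'n set)}"
  define g where "g p i t = (if i = p i then 1 else 0) + t * M $ i $ p i" for p :: "'n \<Rightarrow> 'n" and i t
  define d where "d p = (\<Sum>i\<in>UNIV. M $ i $ p i * (\<Prod>j\<in>UNIV - {i}. g p j 0))" for p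
  have det_eq: "det (mat 1 + t *\<^sub>R M) = (\<Sum>p\<in>P. of_int (sign p) * (\<Prod>i\<in>UNIV. g p i t))" for t
    by (simp add: det_def mat_def P_def g_def)
  have "((\<lambda>t. \<Prod>i\<in>UNIV. g p i t) has_real_derivative d p) (at 0)" for p
    unfolding d_def g_def
    by (rule has_field_derivative_prod) (auto intro!: derivative_eq_intros)
  then have deriv: "((\<lambda>t. det (mat 1 + t *\<^sub>R M)) has_real_derivative (\<Sum>p\<in>P. of_int (sign p) * d p)) (at 0)"
    unfolding det_eq by (intro DERIV_sum DERIV_cmult)
  \<comment> \<open>a permutation other than the identity moves two indices, so every term of \<open>d p\<close> has a zero factor\<close>
  have "d p = 0" if "p \<in> P" "p \<noteq> id" for p
  proof -
    obtain k where k: "p k \<noteq> k" using \<open>p \<noteq> id\<close> by (metis eq_id_iff)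
    have "p (p k) \<noteq> p k"
      using k permutes_inj[of p UNIV] \<open>p \<in> P\<close> by (auto simp: P_def dest: injD)
    have "\<exists>j\<in>UNIV - {i}. g p j 0 = 0" for i
    proof (cases "k = i")
      case True
      then show ?thesis using k \<open>p (p k) \<noteq> p k\<close> by (intro bexI[of _ "p k"]) (auto simp: g_def)
    next
      case False
      then show ?thesis using k by (intro bexI[of _ k]) (auto simp: g_def)
    qed
    then show ?thesis
      unfolding d_def by (intro sum.neutral) (simp add: prod_zero_iff)
  qed
  then have "(\<Sum>p\<in>P. of_int (sign p) * d p) = (\<Sum>p\<in>{id}. of_int (sign p) * d p)"
    by (intro sum.mono_neutral_right) (auto simp: P_def permutes_id finite_permutations)
  also have "\<dots> = trace M"
    by (simp add: sign_id d_def g_def trace_def)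
  finally show ?thesis using deriv by simp
qed

lemma has_real_derivative_det_line:
  fixes A D :: "real^'n^'n"
  assumes "invertible A"
  shows "((\<lambda>t. det (A + t *\<^sub>R D)) has_real_derivative det A * trace (matrix_inv A ** D)) (at 0)"
proof -
  have "A + t *\<^sub>R D = A ** (mat 1 + t *\<^sub>R (matrix_inv A ** D))" for t
    by (simp add: matrix_add_ldistrib matrix_mul_scaleR_right matrix_mul_assoc
        matrix_inv_right[OF assms])
  then have "det (A + t *\<^sub>R D) = det A * det (mat 1 + t *\<^sub>R (matrix_inv A ** D))" for t
    by (simp add: det_mul)
  then show ?thesis
    using DERIV_cmult[OF has_real_derivative_det_id_line, of "det A"] by simp
qed

lemma has_real_derivative_ln_det_line:
  fixes A D :: "real^'n^'n"
  assumes "det A > 0"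
  shows "((\<lambda>t. ln (det (A + t *\<^sub>R D))) has_real_derivative trace (matrix_inv A ** D)) (at 0)"
proof -
  have "invertible A" using assms invertible_det_nz by force
  have "((\<lambda>t. ln (det (A + t *\<^sub>R D))) has_real_derivative
      1 / det (A + 0 *\<^sub>R D) * (det A * trace (matrix_inv A ** D))) (at 0)"
    using assms by (intro DERIV_chain2[OF DERIV_ln_divide] has_real_derivative_det_line
        \<open>invertible A\<close>) simp
  then show ?thesis using assms by simp
qed

lemma has_real_derivative_matrix_inv_line:
  fixes A D :: "real^'n^'n"
  assumes "invertible A"
  shows "((\<lambda>t. matrix_inv (A + t *\<^sub>R D) $ i $ j) has_real_derivative
          - (matrix_inv A ** D ** matrix_inv A) $ i $ j) (at 0)"
proof -
  let ?N = "\<lambda>t. matrix_inv (A + t *\<^sub>R D)" and ?B = "matrix_inv A"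
  have line_cont: "isCont (\<lambda>t. (A + t *\<^sub>R D) $ k $ l) 0" for k l
    by (auto intro!: continuous_intros)
  have "isCont (\<lambda>t. ?N t $ k $ l) 0" for k l
    by (rule isCont_matrix_inv_entry[OF line_cont]) (simp add: assms)
  then have "isCont (\<lambda>t. - ((?B ** D) ** ?N t) $ i $ j) 0"
    by (intro continuous_minus isCont_matrix_mult_entry)
  then have lim: "((\<lambda>t. - (?B ** D ** ?N t) $ i $ j) \<longlongrightarrow> - (?B ** D ** ?B) $ i $ j) (at 0)"
    by (simp add: isCont_def)
  have resolvent: "?N t = ?B - t *\<^sub>R (?B ** D ** ?N t)" if "invertible (A + t *\<^sub>R D)" for t
  proof -
    have "?B = ?B ** ((A + t *\<^sub>R D) ** ?N t)"
      by (simp add: matrix_inv_right[OF that])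
    also have "\<dots> = ?N t + t *\<^sub>R (?B ** D ** ?N t)"
      by (simp add: matrix_mul_assoc matrix_add_ldistrib matrix_mul_add_rdistrib
          matrix_mul_scaleR_right scalar_matrix_assoc[symmetric] matrix_inv_left[OF assms])
    finally show ?thesis by (simp add: algebra_simps)
  qed
  have "eventually (\<lambda>t. invertible (A + t *\<^sub>R D)) (at 0)"
    using eventually_invertible_nhds[OF line_cont] assms
    by (auto simp: eventually_at_filter elim: eventually_mono)
  moreover have "eventually (\<lambda>t. t \<noteq> 0) (at (0::real))"
    by (simp add: eventually_at_filter)
  ultimately have "eventually (\<lambda>t. - (?B ** D ** ?N t) $ i $ j
      = (?N t $ i $ j - ?N 0 $ i $ j) / (t - 0)) (at 0)"
  proof eventually_elim
    case (elim t)
    have "?N t $ i $ j = ?B $ i $ j - t * (?B ** D ** ?N t) $ i $ j"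
      using arg_cong[where f="\<lambda>X. X $ i $ j", OF resolvent[OF elim(1)]] by simp
    then show ?case using elim(2) by (simp add: field_simps)
  qed
  with lim show ?thesis
    unfolding has_field_derivative_iff by (rule Lim_transform_eventually)
qed

lemma has_real_derivative_trace_matrix_inv_line:
  fixes A D S :: "real^'n^'n"
  assumes "invertible A"
  shows "((\<lambda>t. trace (matrix_inv (A + t *\<^sub>R D) ** S)) has_real_derivative
          - trace (matrix_inv A ** D ** matrix_inv A ** S)) (at 0)"
proof -
  have "((\<lambda>t. \<Sum>i\<in>UNIV. \<Sum>j\<in>UNIV. matrix_inv (A + t *\<^sub>R D) $ i $ j * S $ j $ i)
      has_real_derivative
        (\<Sum>i\<in>UNIV. \<Sum>j\<in>UNIV. - (matrix_inv A ** D ** matrix_inv A) $ i $ j * S $ j $ i)) (at 0)"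
    by (intro DERIV_sum DERIV_cmult_right has_real_derivative_matrix_inv_line assms)
  then show ?thesis
    by (simp add: trace_mult_eq_sum sum_negf)
qed

lemma frob_dist_sq: "(frob_dist X T)^2 = (\<Sum>i\<in>UNIV. \<Sum>j\<in>UNIV. ((X - T) $ i $ j)^2)"
  unfolding frob_dist_def frob_def by (simp add: sum_nonneg)

lemma has_real_derivative_frob_dist_sq_line:
  fixes A D T :: "real^'n^'n"
  shows "((\<lambda>t. (frob_dist (A + t *\<^sub>R D) T)^2) has_real_derivative
          2 * trace (transpose (A - T) ** D)) (at 0)"
proof -
  have "(frob_dist (A + t *\<^sub>R D) T)^2
      = (\<Sum>i\<in>UNIV. \<Sum>j\<in>UNIV. ((A - T) $ i $ j + t * D $ i $ j)^2)" for t
    by (simp add: frob_dist_sq algebra_simps)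
  moreover have "((\<lambda>t. \<Sum>i\<in>UNIV. \<Sum>j\<in>UNIV. ((A - T) $ i $ j + t * D $ i $ j)^2)
      has_real_derivative (\<Sum>i\<in>UNIV. \<Sum>j\<in>UNIV. 2 * ((A - T) $ i $ j * D $ i $ j))) (at 0)"
    by (intro DERIV_sum) (auto intro!: derivative_eq_intros)
  ultimately show ?thesis
    by (simp add: trace_transpose_mult_eq_sum sum_distrib_left)
qed

lemma has_real_derivative_f_obj_frob_penalty_line:
  fixes S Sk T D :: "real^'n^'n"
  assumes "pos_def Sk" and "sym_mat D"
  defines "A \<equiv> matrix_inv Sk"
  shows "((\<lambda>t. f_obj S (Sk + t *\<^sub>R D) + \<rho> / 2 * (frob_dist (Sk + t *\<^sub>R D) T)^2)
          has_real_derivative trace ((A - A ** S ** A + \<rho> *\<^sub>R (Sk - T)) ** D)) (at 0)"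
proof -
  have deriv: "((\<lambda>t. f_obj S (Sk + t *\<^sub>R D) + \<rho> / 2 * (frob_dist (Sk + t *\<^sub>R D) T)^2)
      has_real_derivative trace (A ** D) + - trace (A ** D ** A ** S)
        + \<rho> / 2 * (2 * trace (transpose (Sk - T) ** D))) (at 0)"
    unfolding f_obj_def A_def
    using det_pos_def_pos[OF assms(1)] pos_def_invertible[OF assms(1)]
    by (intro DERIV_add DERIV_cmult has_real_derivative_ln_det_line
        has_real_derivative_trace_matrix_inv_line has_real_derivative_frob_dist_sq_line)
  have "trace (A ** S ** A ** D) = trace (A ** D ** A ** S)"
    using trace_mul_sym[of "A ** S" "A ** D"] by (simp add: matrix_mul_assoc)
  moreover have "trace (transpose (Sk - T) ** D) = trace ((Sk - T) ** D)"
    using assms(2) trace_transpose[of "transpose D ** (Sk - T)"]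
    by (simp add: sym_mat_def matrix_transpose_mul trace_mul_sym[of D])
  ultimately have "trace ((A - A ** S ** A + \<rho> *\<^sub>R (Sk - T)) ** D)
      = trace (A ** D) + - trace (A ** D ** A ** S) + \<rho> / 2 * (2 * trace (transpose (Sk - T) ** D))"
    by (simp add: matrix_mul_add_rdistrib matrix_mul_diff_rdistrib trace_add trace_sub
        trace_scaleR scalar_matrix_assoc[symmetric])
  with deriv show ?thesis by simp
qed

section \<open>The penalised objective and the Sylvester step\<close>

lemma dist_C_le_frob_dist:
  assumes "T \<in> C_set k" shows "dist_C k X \<le> frob_dist X T"
  unfolding dist_C_def
  by (rule cINF_lower[OF bdd_belowI2[where m=0] assms]) (simp add: frob_dist_def frob_def sum_nonneg)

lemma dist_C_nonneg: "0 \<le> dist_C k X"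
proof -
  have "0 \<in> C_set k" by (simp add: C_set_def sym_mat_def nnz_def transpose_def vec_eq_iff)
  then show ?thesis
    unfolding dist_C_def by (intro cINF_greatest) (auto simp: frob_dist_def frob_def sum_nonneg)
qed

lemma dist_C_eq_frob_dist:
  assumes "T \<in> proj_C k X" shows "dist_C k X = frob_dist X T"
proof (rule antisym)
  show "dist_C k X \<le> frob_dist X T"
    using assms by (simp add: proj_C_def dist_C_le_frob_dist)
  show "frob_dist X T \<le> dist_C k X"
    using assms unfolding dist_C_def proj_C_def by (intro cINF_greatest) auto
qed

lemma h_obj_le_frob_penalty:
  assumes "T \<in> C_set k" and "\<rho> \<ge> 0"
  shows "h_obj k \<rho> S X \<le> f_obj S X + \<rho> / 2 * (frob_dist X T)^2"
proof -
  have "(dist_C k X)^2 \<le> (frob_dist X T)^2"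
    by (rule power_mono[OF dist_C_le_frob_dist[OF assms(1)] dist_C_nonneg])
  then show ?thesis
    unfolding h_obj_def using assms(2) by (simp add: mult_left_mono)
qed

lemma h_obj_eq_frob_penalty:
  assumes "T \<in> proj_C k X"
  shows "h_obj k \<rho> S X = f_obj S X + \<rho> / 2 * (frob_dist X T)^2"
  unfolding h_obj_def using assms by (simp add: dist_C_eq_frob_dist)

lemma sylvester_step_descent_direction:
  fixes S Sk T Shat :: "real^'n^'n"
  assumes rho: "\<rho> > 0" and pd: "pos_def Sk" and "sym_mat S" and "sym_mat T"
    and sylv: "\<rho> *\<^sub>R Shat + matrix_inv Sk ** Shat ** matrix_inv Sk
                 = \<rho> *\<^sub>R T + matrix_inv Sk ** S ** matrix_inv Sk"
    and grad: "matrix_inv Sk - matrix_inv Sk ** S ** matrix_inv Sk + \<rho> *\<^sub>R (Sk - T) \<noteq> 0"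
  shows "sym_mat (Shat - Sk)"
    and "trace ((matrix_inv Sk - matrix_inv Sk ** S ** matrix_inv Sk + \<rho> *\<^sub>R (Sk - T))
                ** (Shat - Sk)) < 0"
proof -
  define A where "A = matrix_inv Sk"
  define G where "G = A - A ** S ** A + \<rho> *\<^sub>R (Sk - T)"
  define D where "D = Shat - Sk"
  have psdA: "pos_semidef A"
    using pos_def_matrix_inv[OF pd] pos_def_imp_pos_semidef by (simp add: A_def)
  have sylv': "\<rho> *\<^sub>R Shat + A ** Shat ** A = \<rho> *\<^sub>R T + A ** S ** A"
    using sylv by (simp add: A_def)
  have "sym_mat (\<rho> *\<^sub>R T + A ** S ** A)"
    using psdA assms(3,4) unfolding pos_semidef_def sym_mat_def
    by (simp add: transpose_add transpose_scalar matrix_transpose_mul matrix_mul_assoc)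
  then have "sym_mat Shat"
    using sylvester_solution_sym[OF rho psdA _ sylv'] by blast
  then show symD: "sym_mat (Shat - Sk)"
    using pd by (simp add: pos_def_def sym_mat_def transpose_diff)
  have "A ** Sk ** A = A"
    using matrix_inv_left[OF pos_def_invertible[OF pd]] by (simp add: A_def)
  then have GD: "\<rho> *\<^sub>R D + A ** D ** A = - G"
    using sylv' by (simp add: D_def G_def matrix_mul_diff_ldistrib matrix_mul_diff_rdistrib
        scaleR_diff_right algebra_simps)
  have "D \<noteq> 0"
  proof
    assume "D = 0"
    then have "G = 0" using GD by simp
    then show False using grad by (simp add: G_def A_def)
  qed
  have "trace (G ** D) = - trace (transpose D ** (\<rho> *\<^sub>R D + A ** D ** A))"
    using symD GD by (simp add: sym_mat_def D_def trace_mul_sym[of _ "Shat - Sk"]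
        matrix_mul_minus_right trace_minus)
  also have "\<dots> < 0"
    using trace_sylvester_pos[OF rho psdA \<open>D \<noteq> 0\<close>] by simp
  finally show "trace ((matrix_inv Sk - matrix_inv Sk ** S ** matrix_inv Sk + \<rho> *\<^sub>R (Sk - T))
                ** (Shat - Sk)) < 0"
    by (simp add: G_def A_def D_def)
qed

lemma eventually_at_right_0_dyadic:
  assumes "eventually P (at_right (0::real))"
  shows "\<exists>s::nat. P (1 / 2^s)"
proof -
  have "(\<lambda>s::nat. (1 / 2) ^ s) \<longlonglongrightarrow> (0::real)"
    by (rule LIMSEQ_realpow_zero) auto
  then have "filterlim (\<lambda>s::nat. 1 / 2 ^ s) (at_right (0::real)) sequentially"
    by (intro tendsto_imp_filterlim_at_right) (simp_all add: power_one_over)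
  then have "eventually (\<lambda>s::nat. P (1 / 2^s)) sequentially"
    using assms by (simp add: filterlim_iff)
  then show ?thesis
    by (meson eventually_sequentially order_refl)
qed

theorem proposition2:
  fixes S Sk Tk Shat :: "real^'n^'n" and \<rho> :: real and k :: nat
  assumes "CARD('n) \<ge> 2"
    and "pos_semidef S"
    and "\<rho> > 0"
    and "k \<le> CARD('n) choose 2"
    and "pos_def Sk"
    and "Tk \<in> proj_C k Sk"
    and "\<rho> *\<^sub>R Shat + matrix_inv Sk ** Shat ** matrix_inv Sk
           = \<rho> *\<^sub>R Tk + matrix_inv Sk ** S ** matrix_inv Sk"
    and "\<not> stationary k \<rho> S Sk"
  shows "\<exists>s::nat. pos_def (Sk + (1 / 2^s) *\<^sub>R (Shat - Sk)) \<and>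
           h_obj k \<rho> S (Sk + (1 / 2^s) *\<^sub>R (Shat - Sk)) < h_obj k \<rho> S Sk"
proof -
  define D where "D = Shat - Sk"
  define G where "G = matrix_inv Sk - matrix_inv Sk ** S ** matrix_inv Sk + \<rho> *\<^sub>R (Sk - Tk)"
  define g where "g t = f_obj S (Sk + t *\<^sub>R D) + \<rho> / 2 * (frob_dist (Sk + t *\<^sub>R D) Tk)^2" for t
  have TkC: "Tk \<in> C_set k" using assms(6) by (simp add: proj_C_def)
  have "G \<noteq> 0" using assms(5,6,8) by (auto simp: stationary_def G_def)
  then have symD: "sym_mat D" and descent: "trace (G ** D) < 0"
    using sylvester_step_descent_direction[OF assms(3,5) _ _ assms(7)] assms(2) TkC
    by (auto simp: D_def G_def pos_semidef_def C_set_def)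
  have "(g has_real_derivative trace (G ** D)) (at 0)"
    unfolding g_def G_def by (rule has_real_derivative_f_obj_frob_penalty_line[OF assms(5) symD])
  then obtain d where "d > 0" "\<And>t. 0 < t \<Longrightarrow> t < d \<Longrightarrow> g t < g 0"
    using has_real_derivative_neg_dec_right[OF _ descent] by force
  then have "eventually (\<lambda>t. g t < g 0) (at_right 0)"
    by (auto simp: eventually_at_right_field)
  moreover have "eventually (\<lambda>t. pos_def (Sk + t *\<^sub>R D)) (at_right 0)"
    using eventually_pos_def_line[OF assms(5) symD] by (simp add: eventually_at_split)
  ultimately obtain s :: nat where "g (1 / 2^s) < g 0" "pos_def (Sk + (1 / 2^s) *\<^sub>R D)"
    using eventually_at_right_0_dyadic[OF eventually_conj] by blast
  moreover have "h_obj k \<rho> S (Sk + (1 / 2^s) *\<^sub>R D) \<le> g (1 / 2^s)"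
    unfolding g_def using assms(3) by (intro h_obj_le_frob_penalty[OF TkC]) simp
  moreover have "h_obj k \<rho> S Sk = g 0"
    unfolding g_def by (simp add: h_obj_eq_frob_penalty[OF assms(6)])
  ultimately show ?thesis
    unfolding D_def by force
qed

end
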